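(* Let $\mathcal{F}$ be a free filter on $\omega$ and let $\kappa$ be a cardinal with $\omega\le\kappa\le\mathfrak{c}$. Then $C_p(X_{\mathcal{F},\kappa})$ is separable.
   Context: A filter on $\omega$ is free if it contains all cofinite sets. $\mathfrak{c}=2^{\aleph_0}$. $X_{\mathcal{F},\kappa}$ is the space $(\kappa\times\omega)\cup\{\infty\}$ in which every point of $\kappa\times\omega$ is isolated and the neighborhoods of $\infty$ are the sets of the form $\{\infty\}\cup\bigcup\{\{\alpha\}\times A_\alpha:\alpha<\kappa\}$ with $A_\alpha\in\mathcal{F}$ for all $\alpha<\kappa$. $C_p(X)$ is the space of continuous functions $X\to\mathbb{R}$ with the topology of pointwise convergence. *)

theory Defs
  imports "HOL-Analysis.Analysis"
begin

text \<open>The space X_{F,kappa}: points are None (the point infinity) and Some (alpha, n)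
  for alpha in the index type 'k (of cardinality kappa) and n in omega.\<close>

definition XFk :: "nat filter \<Rightarrow> (('k \<times> nat) option) topology" where
  "XFk F = topology (\<lambda>U. None \<in> U \<longrightarrow>
     (\<exists>A :: 'k \<Rightarrow> nat set. (\<forall>\<alpha>. eventually (\<lambda>n. n \<in> A \<alpha>) F) \<and>
        insert None {Some (\<alpha>, n) | \<alpha> n. n \<in> A \<alpha>} \<subseteq> U))"

lemma istopology_XFk:
  "istopology (\<lambda>U. None \<in> U \<longrightarrow>
     (\<exists>A :: 'k \<Rightarrow> nat set. (\<forall>\<alpha>. eventually (\<lambda>n. n \<in> A \<alpha>) F) \<and>
        insert None {Some (\<alpha>, n) | \<alpha> n. n \<in> A \<alpha>} \<subseteq> U))"
proof -
  have int: "\<exists>C. (\<forall>\<alpha>. eventually (\<lambda>n. n \<in> C \<alpha>) F) \<and>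
        insert None {Some (\<alpha>, n) | \<alpha> n. n \<in> C \<alpha>} \<subseteq> S \<inter> T"
    if "\<forall>\<alpha>. eventually (\<lambda>n. n \<in> A \<alpha>) F"
        "insert None {Some (\<alpha>, n) | \<alpha> n. n \<in> A \<alpha>} \<subseteq> S"
       "\<forall>\<alpha>. eventually (\<lambda>n. n \<in> B \<alpha>) F"
        "insert None {Some (\<alpha>, n) | \<alpha> n. n \<in> B \<alpha>} \<subseteq> T"
    for A B :: "'k \<Rightarrow> nat set" and S T :: "('k \<times> nat) option set"
    by (rule exI[of _ "\<lambda>\<alpha>. A \<alpha> \<inter> B \<alpha>"]) (use that in \<open>auto intro: eventually_conj\<close>)
  show ?thesis
    unfolding istopology_def
  proof (intro conjI allI impI)
    fix S T :: "('k \<times> nat) option set"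
    assume "None \<in> S \<longrightarrow> (\<exists>A :: 'k \<Rightarrow> nat set. (\<forall>\<alpha>. eventually (\<lambda>n. n \<in> A \<alpha>) F) \<and>
        insert None {Some (\<alpha>, n) | \<alpha> n. n \<in> A \<alpha>} \<subseteq> S)"
      and "None \<in> T \<longrightarrow> (\<exists>A :: 'k \<Rightarrow> nat set. (\<forall>\<alpha>. eventually (\<lambda>n. n \<in> A \<alpha>) F) \<and>
        insert None {Some (\<alpha>, n) | \<alpha> n. n \<in> A \<alpha>} \<subseteq> T)"
      and "None \<in> S \<inter> T"
    then show "\<exists>A :: 'k \<Rightarrow> nat set. (\<forall>\<alpha>. eventually (\<lambda>n. n \<in> A \<alpha>) F) \<and>
        insert None {Some (\<alpha>, n) | \<alpha> n. n \<in> A \<alpha>} \<subseteq> S \<inter> T"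
      using int by (meson IntD1 IntD2)
  next
    fix K :: "('k \<times> nat) option set set"
    assume K: "\<forall>S\<in>K. None \<in> S \<longrightarrow> (\<exists>A :: 'k \<Rightarrow> nat set. (\<forall>\<alpha>. eventually (\<lambda>n. n \<in> A \<alpha>) F) \<and>
        insert None {Some (\<alpha>, n) | \<alpha> n. n \<in> A \<alpha>} \<subseteq> S)" and "None \<in> \<Union>K"
    then obtain S where "S \<in> K" "None \<in> S" by blast
    with K obtain A :: "'k \<Rightarrow> nat set" where "\<forall>\<alpha>. eventually (\<lambda>n. n \<in> A \<alpha>) F"
        "insert None {Some (\<alpha>, n) | \<alpha> n. n \<in> A \<alpha>} \<subseteq> S" by blast
    with \<open>S \<in> K\<close> show "\<exists>A :: 'k \<Rightarrow> nat set. (\<forall>\<alpha>. eventually (\<lambda>n. n \<in> A \<alpha>) F) \<and>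
        insert None {Some (\<alpha>, n) | \<alpha> n. n \<in> A \<alpha>} \<subseteq> \<Union>K" by blast
  qed
qed

definition Cp :: "'a topology \<Rightarrow> ('a \<Rightarrow> real) topology" where
  "Cp X = subtopology (product_topology (\<lambda>_. euclideanreal) (topspace X))
            {f \<in> topspace (product_topology (\<lambda>_. euclideanreal) (topspace X)).
               continuous_map X euclideanreal f}"

definition free_filter :: "nat filter \<Rightarrow> bool" where
  "free_filter F \<longleftrightarrow> F \<noteq> bot \<and> (\<forall>A. finite (UNIV - A) \<longrightarrow> eventually (\<lambda>n. n \<in> A) F)"

end

theory Submission
  imports Defs
begin

(* Fix an injection g of kappa into the reals. The candidate dense set consists of the
   functions that take a rational value c at infinity and the value c plus finitely many
   rational bumps q * [n = m and a < g alpha < b] (a, b rational) at (alpha, n). There are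
   countably many of them, and each equals c at all levels n beyond the finitely many m it
   involves, hence is continuous at infinity because F contains the cofinite sets.
   A continuous f is approximated on finitely many points one point at a time: by injectivity
   of g, a rational interval around g alpha0 avoids the g-values of the finitely many other
   indices at the same level n0, so a bump at (alpha0, n0) corrects the value there without
   disturbing the other points. *)

lemma topspace_Cp:
  "topspace (Cp X) = {f \<in> extensional (topspace X). continuous_map X euclideanreal f}"
  by (auto simp: Cp_def PiE_def)

lemma openin_Cp_contains_pointwise_ball:
  assumes "openin (Cp X) T" "f \<in> T"
  obtains S e where "finite S" "S \<subseteq> topspace X" "e > 0"
    "\<And>d. d \<in> topspace (Cp X) \<Longrightarrow> (\<forall>x\<in>S. \<bar>d x - f x\<bar> < e) \<Longrightarrow> d \<in> T"
proof -
  obtain U where U: "openin (product_topology (\<lambda>_. euclideanreal) (topspace X)) U"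
      "T = U \<inter> topspace (Cp X)"
    using assms(1) by (auto simp: Cp_def openin_subtopology)
  then obtain V where V: "finite {i \<in> topspace X. V i \<noteq> UNIV}"
      "\<And>i. i \<in> topspace X \<Longrightarrow> open (V i)" "f \<in> Pi\<^sub>E (topspace X) V"
      "Pi\<^sub>E (topspace X) V \<subseteq> U"
    using assms(2) unfolding openin_product_topology_alt by auto
  define S where "S = {i \<in> topspace X. V i \<noteq> UNIV}"
  have "\<exists>r>0. ball (f i) r \<subseteq> V i" if "i \<in> topspace X" for i
    using V(2,3) that open_contains_ball by (fastforce simp: PiE_iff)
  then obtain r where r: "\<And>i. i \<in> topspace X \<Longrightarrow> r i > 0 \<and> ball (f i) (r i) \<subseteq> V i"
    by metis
  define e where "e = Min (insert 1 (r ` S))"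
  have "e > 0"
    using V(1) r by (auto simp: e_def S_def)
  moreover have "d \<in> T" if d: "d \<in> topspace (Cp X)" "\<forall>x\<in>S. \<bar>d x - f x\<bar> < e" for d
  proof -
    have "d x \<in> V x" if "x \<in> topspace X" for x
    proof (cases "x \<in> S")
      case True
      have "e \<le> r x"
        using V(1) True by (simp add: e_def S_def)
      with d(2) True have "d x \<in> ball (f x) (r x)"
        by (auto simp: dist_real_def)
      then show ?thesis
        using r that by blast
    qed (use that S_def in auto)
    then have "d \<in> Pi\<^sub>E (topspace X) V"
      using d(1) by (auto simp: topspace_Cp PiE_iff)
    then show ?thesis
      using V(4) U(2) d(1) by blast
  qed
  ultimately show ?thesis
    using that V(1) by (auto simp: S_def)
qed

lemma separable_space_CpI:
  assumes "countable D" "D \<subseteq> topspace (Cp X)"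
    and approx: "\<And>f S e. f \<in> topspace (Cp X) \<Longrightarrow> finite S \<Longrightarrow> S \<subseteq> topspace X \<Longrightarrow> e > 0
                   \<Longrightarrow> \<exists>d\<in>D. \<forall>x\<in>S. \<bar>d x - f x\<bar> < e"
  shows "separable_space (Cp X)"
  unfolding separable_space_def
proof (intro exI conjI)
  have "f \<in> Cp X closure_of D" if f: "f \<in> topspace (Cp X)" for f
    unfolding in_closure_of
  proof (intro conjI allI impI f)
    fix T assume "f \<in> T \<and> openin (Cp X) T"
    then obtain S e where "finite S" "S \<subseteq> topspace X" "e > 0"
        and ball: "\<And>d. d \<in> topspace (Cp X) \<Longrightarrow> (\<forall>x\<in>S. \<bar>d x - f x\<bar> < e) \<Longrightarrow> d \<in> T"
      by (metis openin_Cp_contains_pointwise_ball)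
    then obtain d where "d \<in> D" "\<forall>x\<in>S. \<bar>d x - f x\<bar> < e"
      using approx[OF f] by blast
    then show "\<exists>d. d \<in> D \<and> d \<in> T"
      using ball assms(2) by blast
  qed
  then show "Cp X closure_of D = topspace (Cp X)"
    by (simp add: closure_of_subset_topspace subset_antisym subsetI)
qed (use assms in auto)

lemma openin_XFk:
  "openin (XFk F) U \<longleftrightarrow> (None \<in> U \<longrightarrow>
     (\<exists>A :: 'k \<Rightarrow> nat set. (\<forall>\<alpha>. eventually (\<lambda>n. n \<in> A \<alpha>) F) \<and>
        insert None {Some (\<alpha>, n) | \<alpha> n. n \<in> A \<alpha>} \<subseteq> U))"
  unfolding XFk_def by (subst topology_inverse'[OF istopology_XFk]) (rule refl)

lemma topspace_XFk [simp]: "topspace (XFk F) = UNIV"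
proof -
  have "openin (XFk F) UNIV"
    unfolding openin_XFk by (intro impI exI[of _ "\<lambda>_. UNIV"]) auto
  then show ?thesis
    using openin_subset by blast
qed

lemma continuous_map_XFk_eventually_const:
  assumes "free_filter F"
    and "\<And>\<alpha> n. n \<ge> N \<Longrightarrow> f (Some (\<alpha>, n)) = f None"
    and "range f \<subseteq> topspace Y"
  shows "continuous_map (XFk F) Y f"
  unfolding continuous_map_def topspace_XFk
proof (intro conjI allI impI)
  have tail: "eventually (\<lambda>n. n \<in> {N..}) F"
  proof -
    have "UNIV - {N..} = {..<N}" by auto
    then show ?thesis
      using assms(1) unfolding free_filter_def by (metis finite_lessThan)
  qed
  fix U assume "openin Y U"
  show "openin (XFk F) {x \<in> UNIV. f x \<in> U}"
    unfolding openin_XFk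
    by (intro impI exI[of _ "\<lambda>_. {N..}"]) (use tail assms(2) in auto)
qed (use assms(3) in auto)

fun bump :: "('k \<Rightarrow> real) \<Rightarrow> rat \<times> rat \<times> nat \<times> rat \<Rightarrow> 'k \<times> nat \<Rightarrow> real" where
  "bump g (a, b, m, q) (\<alpha>, n) =
     (if n = m \<and> of_rat a < g \<alpha> \<and> g \<alpha> < of_rat b then of_rat q else 0)"

definition bump_sum :: "('k \<Rightarrow> real) \<Rightarrow> (rat \<times> rat \<times> nat \<times> rat) list \<Rightarrow> 'k \<times> nat \<Rightarrow> real" where
  "bump_sum g L p = (\<Sum>z\<leftarrow>L. bump g z p)"

definition bump_fun ::
    "('k \<Rightarrow> real) \<Rightarrow> rat \<Rightarrow> (rat \<times> rat \<times> nat \<times> rat) list \<Rightarrow> ('k \<times> nat) option \<Rightarrow> real" where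
  "bump_fun g c L x = of_rat c + (case x of None \<Rightarrow> 0 | Some p \<Rightarrow> bump_sum g L p)"

lemma bump_sum_Cons [simp]: "bump_sum g (z # L) p = bump g z p + bump_sum g L p"
  by (simp add: bump_sum_def)

lemma bump_sum_eventually_zero: "\<exists>N. \<forall>\<alpha> n. n \<ge> N \<longrightarrow> bump_sum g L (\<alpha>, n) = 0"
proof (induction L)
  case Nil
  then show ?case by (simp add: bump_sum_def)
next
  case (Cons z L)
  then obtain N where N: "\<forall>\<alpha> n. n \<ge> N \<longrightarrow> bump_sum g L (\<alpha>, n) = 0" ..
  obtain a b m q where z: "z = (a, b, m, q)" by (cases z)
  show ?case
    by (intro exI[of _ "max N (Suc m)"]) (simp add: N z)
qed

lemma continuous_map_bump_fun:
  assumes "free_filter F"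
  shows "continuous_map (XFk F) euclideanreal (bump_fun g c L)"
proof -
  obtain N where "\<forall>\<alpha> n. n \<ge> N \<longrightarrow> bump_sum g L (\<alpha>, n) = 0"
    using bump_sum_eventually_zero by blast
  then show ?thesis
    by (intro continuous_map_XFk_eventually_const[OF assms, of N]) (auto simp: bump_fun_def)
qed

lemma rat_interval_isolating:
  fixes y :: real
  assumes "finite G" "y \<notin> G"
  obtains a b :: rat where "of_rat a < y" "y < of_rat b"
    "\<And>z. z \<in> G \<Longrightarrow> \<not> (of_rat a < z \<and> z < of_rat b)"
proof -
  have "open (- G)"
    using assms(1) by (simp add: finite_imp_closed open_Compl)
  then obtain r where r: "r > 0" "ball y r \<subseteq> - G"
    using assms(2) open_contains_ball by blast
  obtain a where a: "y - r < of_rat a" "of_rat a < y"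
    using of_rat_dense[of "y - r" y] r(1) by auto
  obtain b where b: "y < of_rat b" "of_rat b < y + r"
    using of_rat_dense[of y "y + r"] r(1) by auto
  have "\<not> (of_rat a < z \<and> z < of_rat b)" if "z \<in> G" for z
    using r(2) a b that by (auto simp: dist_real_def subset_iff)
  with a b that show ?thesis by blast
qed

lemma rat_approx:
  fixes t e :: real
  assumes "e > 0"
  obtains q :: rat where "\<bar>of_rat q - t\<bar> < e"
proof -
  obtain q where "t - e < of_rat q" "of_rat q < t + e"
    using of_rat_dense[of "t - e" "t + e"] assms by auto
  then show ?thesis
    using that[of q] by (simp add: abs_less_iff)
qed

lemma isolated_bump:
  fixes g :: "'k \<Rightarrow> real"
  assumes "inj g" "finite P" "p \<notin> P" "e > 0"
  shows "\<exists>z. \<bar>bump g z p - t\<bar> < e \<and> (\<forall>p'\<in>P. bump g z p' = 0)"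
proof -
  obtain \<alpha>0 n0 where p: "p = (\<alpha>0, n0)" by fastforce
  define G where "G = g ` ((\<lambda>\<alpha>. (\<alpha>, n0)) -` P)"
  have "finite G"
    unfolding G_def using assms(2) by (intro finite_imageI finite_vimageI) (auto simp: inj_on_def)
  moreover have "g \<alpha>0 \<notin> G"
    unfolding G_def using assms(1,3) p by (auto dest: injD)
  ultimately obtain a b where ab: "of_rat a < g \<alpha>0" "g \<alpha>0 < of_rat b"
      "\<And>z. z \<in> G \<Longrightarrow> \<not> (of_rat a < z \<and> z < of_rat b)"
    using rat_interval_isolating by blast
  obtain q where q: "\<bar>of_rat q - t\<bar> < e"
    using rat_approx[OF assms(4)] .
  show ?thesis
  proof (intro exI conjI ballI)
    show "\<bar>bump g (a, b, n0, q) p - t\<bar> < e"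
      using ab q p by simp
    fix p' assume "p' \<in> P"
    moreover obtain \<alpha> n where p': "p' = (\<alpha>, n)" by fastforce
    ultimately have "n = n0 \<Longrightarrow> g \<alpha> \<in> G"
      by (auto simp: G_def)
    then show "bump g (a, b, n0, q) p' = 0"
      using ab(3) p' by auto
  qed
qed

lemma bump_sum_approx:
  fixes g :: "'k \<Rightarrow> real"
  assumes "inj g" "finite P" "e > 0"
  shows "\<exists>L. \<forall>p\<in>P. \<bar>bump_sum g L p - h p\<bar> < e"
  using assms(2)
proof (induction P rule: finite_induct)
  case empty
  show ?case by simp
next
  case (insert p P)
  then obtain L where L: "\<forall>p'\<in>P. \<bar>bump_sum g L p' - h p'\<bar> < e" by blast
  obtain z where z: "\<bar>bump g z p - (h p - bump_sum g L p)\<bar> < e"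
      "\<And>p'. p' \<in> P \<Longrightarrow> bump g z p' = 0"
    using isolated_bump[OF assms(1) insert(1,2) assms(3), of "h p - bump_sum g L p"]
    by (elim exE conjE) simp
  have "\<forall>p'\<in>insert p P. \<bar>bump_sum g (z # L) p' - h p'\<bar> < e"
  proof
    fix p' assume "p' \<in> insert p P"
    then show "\<bar>bump_sum g (z # L) p' - h p'\<bar> < e"
    proof
      assume "p' \<in> P"
      then show ?thesis using L z(2)[of p'] by simp
    qed (use z(1) in \<open>simp add: algebra_simps\<close>)
  qed
  then show ?case ..
qed

lemma bump_fun_approx:
  fixes g :: "'k \<Rightarrow> real"
  assumes "inj g" "finite S" "e > 0"
  shows "\<exists>c L. \<forall>x\<in>S. \<bar>bump_fun g c L x - f x\<bar> < e"
proof -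
  obtain c where c: "\<bar>of_rat c - f None\<bar> < e"
    using rat_approx[OF assms(3)] .
  have fin: "finite (Some -` S)"
    using assms(2) by (rule finite_vimageI) simp
  obtain L where L: "\<And>p. Some p \<in> S \<Longrightarrow> \<bar>bump_sum g L p - (f (Some p) - of_rat c)\<bar> < e"
    using bump_sum_approx[OF assms(1) fin assms(3), where h = "\<lambda>p. f (Some p) - of_rat c"]
    by auto
  have "\<bar>bump_fun g c L x - f x\<bar> < e" if "x \<in> S" for x
  proof (cases x)
    case None
    then show ?thesis using c by (simp add: bump_fun_def)
  next
    case (Some p)
    then show ?thesis using L[of p] that by (simp add: bump_fun_def algebra_simps)
  qed
  then show ?thesis by blast
qed

theorem mainTheorem15:
  fixes F :: "nat filter"
  assumes "free_filter F"
    and "infinite (UNIV :: 'k set)"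
    and "\<exists>g :: 'k \<Rightarrow> real. inj g"
  shows "separable_space (Cp (XFk F :: ('k \<times> nat) option topology))"
proof -
  obtain g :: "'k \<Rightarrow> real" where g: "inj g"
    using assms(3) by blast
  let ?D = "range (\<lambda>(c, L). bump_fun g c L)"
  show ?thesis
  proof (rule separable_space_CpI)
    show "countable ?D"
      by simp
    show "?D \<subseteq> topspace (Cp (XFk F))"
      using continuous_map_bump_fun[OF assms(1)] by (auto simp: topspace_Cp)
    fix f and S :: "('k \<times> nat) option set" and e :: real
    assume "finite S" "e > 0"
    then obtain c L where "\<forall>x\<in>S. \<bar>bump_fun g c L x - f x\<bar> < e"
      using bump_fun_approx[OF g] by blast
    then show "\<exists>d\<in>?D. \<forall>x\<in>S. \<bar>d x - f x\<bar> < e"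
      by blast
  qed
qed

end
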